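(* For any nonempty basic clopen sets $\mathcal U,\mathcal V\subseteq\mathcal G$ there is a permutation $\varphi$ of $\mathbb N$ with $\varphi(1)=1$ such that $h_\varphi(\mathcal U)\cap\mathcal V\neq\emptyset$.
   Context: Let $\mathbb N=\{1,2,3,\dots\}$. Equip $\mathbb N^{\mathbb N\times\mathbb N}$ with the product topology of the discrete topology on $\mathbb N$. Let $\mathcal G$ be the subspace consisting of those $A\in\mathbb N^{\mathbb N\times\mathbb N}$ that are the multiplication table of a group on the underlying set $\mathbb N$ whose identity element is $1$. Basic clopen sets are the sets of the form $\{G\in\mathcal G:\ G(n_i,m_i)=k_i\text{ for all }i\le l\}$ with $l,n_i,m_i,k_i\in\mathbb N$ (i.e. finitely many products $n_i\cdot m_i=k_i$ are prescribed). For a bijection $\varphi:\mathbb N\to\mathbb N$ fixing $1$, the induced homeomorphism $h_\varphi:\mathcal G\to\mathcal G$ is defined by $h_\varphi(G)(i,j)=\varphi(G(\varphi^{-1}(i),\varphi^{-1}(j)))$, so that $\varphi$ is an isomorphism from the group with table $G$ onto the group with table $h_\varphi(G)$. *)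

theory Defs
  imports Main
begin

text \<open>Elements of N^(N x N), with N = {1,2,...}, are represented as functions
  nat => nat => nat whose values at arguments involving 0 are normalised to 0.\<close>

definition is_table :: "(nat \<Rightarrow> nat \<Rightarrow> nat) \<Rightarrow> bool" where
  "is_table A \<longleftrightarrow> (\<forall>i j. (i = 0 \<or> j = 0) \<longrightarrow> A i j = 0) \<and>
                    (\<forall>i j. i \<ge> 1 \<and> j \<ge> 1 \<longrightarrow> A i j \<ge> 1)"

definition group_table :: "(nat \<Rightarrow> nat \<Rightarrow> nat) \<Rightarrow> bool" where
  "group_table A \<longleftrightarrow> is_table A \<and>
     (\<forall>i j k. i \<ge> 1 \<and> j \<ge> 1 \<and> k \<ge> 1 \<longrightarrow> A (A i j) k = A i (A j k)) \<and>
     (\<forall>i. i \<ge> 1 \<longrightarrow> A 1 i = i \<and> A i 1 = i) \<and>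
     (\<forall>i. i \<ge> 1 \<longrightarrow> (\<exists>j. j \<ge> 1 \<and> A i j = 1 \<and> A j i = 1))"

definition GG :: "(nat \<Rightarrow> nat \<Rightarrow> nat) set" where
  "GG = {A. group_table A}"

definition basic_clopen :: "(nat \<times> nat \<times> nat) list \<Rightarrow> (nat \<Rightarrow> nat \<Rightarrow> nat) set" where
  "basic_clopen L = {G \<in> GG. \<forall>(n, m, k) \<in> set L. G n m = k}"

definition pos_triples :: "(nat \<times> nat \<times> nat) list \<Rightarrow> bool" where
  "pos_triples L \<longleftrightarrow> (\<forall>(n, m, k) \<in> set L. n \<ge> 1 \<and> m \<ge> 1 \<and> k \<ge> 1)"

definition perm1 :: "(nat \<Rightarrow> nat) \<Rightarrow> bool" where
  "perm1 \<phi> \<longleftrightarrow> bij_betw \<phi> {1..} {1..} \<and> \<phi> 1 = 1"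

definition h_perm :: "(nat \<Rightarrow> nat) \<Rightarrow> (nat \<Rightarrow> nat \<Rightarrow> nat) \<Rightarrow> (nat \<Rightarrow> nat \<Rightarrow> nat)" where
  "h_perm \<phi> G = (\<lambda>i j. if i \<ge> 1 \<and> j \<ge> 1
      then \<phi> (G (inv_into {1..} \<phi> i) (inv_into {1..} \<phi> j)) else 0)"

end

theory Submission
  imports Defs "HOL-Library.Nat_Bijection" "HOL-Library.Countable_Set"
begin

text \<open>Take \<open>G\<^sub>1 \<in> \<U>\<close> and \<open>G\<^sub>2 \<in> \<V>\<close> and relabel their direct product \<open>P = G\<^sub>1 \<times> G\<^sub>2\<close> on \<open>\<nat>\<close>.
  A basic clopen set constrains only finitely many products, so a permutation of \<open>\<nat>\<close> that
  sends the finitely many relevant elements \<open>n\<close> of \<open>G\<^sub>1\<close> to \<open>(n, 1)\<close> turns \<open>P\<close> into a table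
  in \<open>\<U>\<close>; symmetrically, using \<open>n \<mapsto> (1, n)\<close>, one obtains a table in \<open>\<V>\<close>. Both tables are
  relabellings of the same group, so they differ by a permutation fixing \<open>1\<close>.\<close>

(* Keeps simp from rewriting 1 to Suc 0, so that the facts about {1..} below stay applicable. *)
declare One_nat_def [simp del]

lemma finite_inj_on_extends_to_bij_betw:
  assumes "countable A" "infinite A" "finite S" "S \<subseteq> A" "inj_on f S" "f ` S \<subseteq> A"
  obtains \<alpha> where "bij_betw \<alpha> A A" "\<And>s. s \<in> S \<Longrightarrow> \<alpha> s = f s"
proof -
  have "countable (A - S)" "infinite (A - S)" "countable (A - f ` S)" "infinite (A - f ` S)"
    using assms by (auto simp: Diff_infinite_finite)
  then obtain g where g: "bij_betw g (A - S) (A - f ` S)"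
    by (meson bij_betw_inv_into bij_betw_trans countableE_infinite)
  define \<alpha> where "\<alpha> x = (if x \<in> S then f x else g x)" for x
  have "bij_betw \<alpha> S (f ` S)"
    using inj_on_imp_bij_betw[OF assms(5)] by (rule bij_betw_cong[THEN iffD1, rotated]) (simp add: \<alpha>_def)
  moreover have "bij_betw \<alpha> (A - S) (A - f ` S)"
    using g by (rule bij_betw_cong[THEN iffD1, rotated]) (simp add: \<alpha>_def)
  ultimately have "bij_betw \<alpha> (S \<union> (A - S)) (f ` S \<union> (A - f ` S))"
    by (rule bij_betw_combine) blast
  moreover have "S \<union> (A - S) = A" "f ` S \<union> (A - f ` S) = A"
    using assms(4,6) by blast+
  ultimately show ?thesis
    using that by (simp add: \<alpha>_def)
qed

lemma pos_bij_simps: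
  assumes "bij_betw \<phi> {1..} {1..}" and "(1::nat) \<le> x"
  shows "1 \<le> \<phi> x" "1 \<le> inv_into {1..} \<phi> x"
    "\<phi> (inv_into {1..} \<phi> x) = x" "inv_into {1..} \<phi> (\<phi> x) = x"
  using assms bij_betw_apply[OF assms(1)] bij_betw_apply[OF bij_betw_inv_into[OF assms(1)]]
  by (auto simp: bij_betw_inv_into_left bij_betw_inv_into_right)

lemma perm1_comp: "perm1 \<phi> \<Longrightarrow> perm1 \<psi> \<Longrightarrow> perm1 (\<phi> \<circ> \<psi>)"
  by (auto simp: perm1_def intro: bij_betw_trans)

lemma perm1_inv_into: "perm1 \<phi> \<Longrightarrow> perm1 (inv_into {1..} \<phi>)"
  unfolding perm1_def by (metis bij_betw_inv_into order_refl pos_bij_simps(4))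

lemma h_perm_cong:
  assumes "bij_betw \<psi> {1..} {1..}" and "is_table G" and "\<And>x. 1 \<le> x \<Longrightarrow> \<phi> x = \<psi> x"
  shows "h_perm \<phi> G = h_perm \<psi> G"
proof -
  have "inv_into {1..} \<phi> = inv_into {1..} \<psi>"
    using assms(3) by (intro ext) (auto simp: inv_into_def intro!: arg_cong[where f = Eps])
  then show ?thesis
    using assms by (auto simp: h_perm_def is_table_def pos_bij_simps fun_eq_iff)
qed

lemma h_perm_h_perm:
  assumes "bij_betw \<phi> {1..} {1..}" and "bij_betw \<psi> {1..} {1..}"
  shows "h_perm \<phi> (h_perm \<psi> G) = h_perm (\<phi> \<circ> \<psi>) G"
proof -
  have "inv_into {1..} (\<phi> \<circ> \<psi>) x = inv_into {1..} \<psi> (inv_into {1..} \<phi> x)" if "1 \<le> x" for x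
  proof (rule inv_into_f_eq)
    show "inj_on (\<phi> \<circ> \<psi>) {1..}"
      using bij_betw_trans[OF assms(2,1)] by (simp add: bij_betw_def)
  qed (use that assms in \<open>simp_all add: pos_bij_simps\<close>)
  then show ?thesis
    using assms by (auto simp: h_perm_def pos_bij_simps fun_eq_iff)
qed

lemma h_perm_inv_into:
  assumes "bij_betw \<alpha> {1..} {1..}" and "1 \<le> i" and "1 \<le> j"
  shows "h_perm (inv_into {1..} \<alpha>) G i j = inv_into {1..} \<alpha> (G (\<alpha> i) (\<alpha> j))"
  using assms by (simp add: h_perm_def inv_into_inv_into_eq)

lemma h_perm_comp_inv_into:
  assumes "perm1 \<psi>1" and "perm1 \<psi>2" and "is_table G"
  shows "h_perm (\<psi>2 \<circ> inv_into {1..} \<psi>1) (h_perm \<psi>1 G) = h_perm \<psi>2 G"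
proof -
  have "h_perm (\<psi>2 \<circ> inv_into {1..} \<psi>1) (h_perm \<psi>1 G) = h_perm (\<psi>2 \<circ> inv_into {1..} \<psi>1 \<circ> \<psi>1) G"
    using assms(1,2) perm1_comp[OF assms(2) perm1_inv_into[OF assms(1)]]
    by (intro h_perm_h_perm) (auto simp: perm1_def)
  also have "\<dots> = h_perm \<psi>2 G"
    using assms by (intro h_perm_cong) (auto simp: perm1_def pos_bij_simps)
  finally show ?thesis .
qed

lemma group_tableD:
  assumes "group_table G"
  shows group_table_pos: "1 \<le> i \<Longrightarrow> 1 \<le> j \<Longrightarrow> 1 \<le> G i j"
    and group_table_assoc: "1 \<le> i \<Longrightarrow> 1 \<le> j \<Longrightarrow> 1 \<le> k \<Longrightarrow> G (G i j) k = G i (G j k)"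
    and group_table_left_one: "1 \<le> i \<Longrightarrow> G 1 i = i"
    and group_table_right_one: "1 \<le> i \<Longrightarrow> G i 1 = i"
    and group_table_inverse: "1 \<le> i \<Longrightarrow> \<exists>j\<ge>1. G i j = 1 \<and> G j i = 1"
  using assms by (auto simp: group_table_def is_table_def)

lemma group_table_h_perm:
  assumes "perm1 \<phi>" and G: "group_table G"
  shows "group_table (h_perm \<phi> G)"
proof -
  define \<psi> where "\<psi> = inv_into {1..} \<phi>"
  define H where "H = h_perm \<phi> G"
  have \<phi>: "bij_betw \<phi> {1..} {1..}" and "\<phi> 1 = 1"
    using assms(1) by (auto simp: perm1_def)
  then have "\<psi> 1 = 1"
    unfolding \<psi>_def by (metis order_refl pos_bij_simps(4))
  note bij = pos_bij_simps[OF \<phi>, folded \<psi>_def]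
  have H: "H i j = \<phi> (G (\<psi> i) (\<psi> j))" if "1 \<le> i" "1 \<le> j" for i j
    using that by (simp add: H_def h_perm_def \<psi>_def)
  have "is_table H"
    by (auto simp: is_table_def H bij group_table_pos[OF G]) (simp_all add: H_def h_perm_def)
  moreover have "H (H i j) k = H i (H j k)" if "1 \<le> i" "1 \<le> j" "1 \<le> k" for i j k
    using that by (simp add: H bij group_table_pos[OF G] group_table_assoc[OF G])
  moreover have "H 1 i = i \<and> H i 1 = i" if "1 \<le> i" for i
    using that \<open>\<psi> 1 = 1\<close>
    by (simp add: H bij group_table_left_one[OF G] group_table_right_one[OF G])
  moreover have "\<exists>j\<ge>1. H i j = 1 \<and> H j i = 1" if i: "1 \<le> i" for i
  proof -
    obtain j where "1 \<le> j" "G (\<psi> i) j = 1" "G j (\<psi> i) = 1"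
      using group_table_inverse[OF G bij(2)[OF i]] by blast
    then show ?thesis
      using i \<open>\<phi> 1 = 1\<close> by (intro exI[of _ "\<phi> j"]) (simp add: H bij)
  qed
  ultimately show ?thesis
    unfolding H_def group_table_def by blast
qed

definition pos_pair :: "nat \<Rightarrow> nat \<Rightarrow> nat" where
  "pos_pair a b = Suc (prod_encode (a - 1, b - 1))"

definition pos_fst :: "nat \<Rightarrow> nat" where
  "pos_fst x = Suc (fst (prod_decode (x - 1)))"

definition pos_snd :: "nat \<Rightarrow> nat" where
  "pos_snd x = Suc (snd (prod_decode (x - 1)))"

lemma pos_pair_pos [simp]: "1 \<le> pos_pair a b"
  and pos_fst_pos [simp]: "1 \<le> pos_fst x"
  and pos_snd_pos [simp]: "1 \<le> pos_snd x"
  by (simp_all add: pos_pair_def pos_fst_def pos_snd_def)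

lemma pos_fst_pos_pair [simp]: "1 \<le> a \<Longrightarrow> 1 \<le> b \<Longrightarrow> pos_fst (pos_pair a b) = a"
  and pos_snd_pos_pair [simp]: "1 \<le> a \<Longrightarrow> 1 \<le> b \<Longrightarrow> pos_snd (pos_pair a b) = b"
  by (simp_all add: pos_pair_def pos_fst_def pos_snd_def prod_encode_inverse)

lemma pos_pair_pos_fst_pos_snd [simp]: "1 \<le> x \<Longrightarrow> pos_pair (pos_fst x) (pos_snd x) = x"
  by (simp add: pos_pair_def pos_fst_def pos_snd_def prod_decode_inverse)

lemma pos_pair_one_one [simp]: "pos_pair 1 1 = 1"
  by (simp add: pos_pair_def prod_encode_def triangle_def)

lemma pos_fst_one [simp]: "pos_fst 1 = 1"
  and pos_snd_one [simp]: "pos_snd 1 = 1"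
  using pos_fst_pos_pair[of 1 1] pos_snd_pos_pair[of 1 1] by simp_all

definition prod_table :: "(nat \<Rightarrow> nat \<Rightarrow> nat) \<Rightarrow> (nat \<Rightarrow> nat \<Rightarrow> nat) \<Rightarrow> nat \<Rightarrow> nat \<Rightarrow> nat" where
  "prod_table G1 G2 x y = (if 1 \<le> x \<and> 1 \<le> y
     then pos_pair (G1 (pos_fst x) (pos_fst y)) (G2 (pos_snd x) (pos_snd y)) else 0)"

lemma prod_table_pos_pair:
  "1 \<le> a \<Longrightarrow> 1 \<le> b \<Longrightarrow> 1 \<le> c \<Longrightarrow> 1 \<le> d \<Longrightarrow>
    prod_table G1 G2 (pos_pair a b) (pos_pair c d) = pos_pair (G1 a c) (G2 b d)"
  by (simp add: prod_table_def)

lemma group_table_prod_table: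
  assumes G1: "group_table G1" and G2: "group_table G2"
  shows "group_table (prod_table G1 G2)"
proof -
  note simps = prod_table_def group_table_pos[OF G1] group_table_pos[OF G2]
  have "is_table (prod_table G1 G2)"
    by (simp add: is_table_def prod_table_def)
  moreover have "\<forall>i j k. 1 \<le> i \<and> 1 \<le> j \<and> 1 \<le> k \<longrightarrow>
      prod_table G1 G2 (prod_table G1 G2 i j) k = prod_table G1 G2 i (prod_table G1 G2 j k)"
    by (simp add: simps group_table_assoc[OF G1] group_table_assoc[OF G2])
  moreover have "\<forall>i. 1 \<le> i \<longrightarrow> prod_table G1 G2 1 i = i \<and> prod_table G1 G2 i 1 = i"
    by (simp add: simps group_table_left_one[OF G1] group_table_left_one[OF G2]
        group_table_right_one[OF G1] group_table_right_one[OF G2])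
  moreover have "\<exists>j\<ge>1. prod_table G1 G2 i j = 1 \<and> prod_table G1 G2 j i = 1" if "1 \<le> i" for i
  proof -
    obtain a where "1 \<le> a" "G1 (pos_fst i) a = 1" "G1 a (pos_fst i) = 1"
      using group_table_inverse[OF G1 pos_fst_pos] by blast
    moreover obtain b where "1 \<le> b" "G2 (pos_snd i) b = 1" "G2 b (pos_snd i) = 1"
      using group_table_inverse[OF G2 pos_snd_pos] by blast
    ultimately show ?thesis
      using that by (intro exI[of _ "pos_pair a b"]) (simp add: prod_table_def)
  qed
  ultimately show ?thesis
    unfolding group_table_def by blast
qed

definition table_embedding :: "(nat \<Rightarrow> nat) \<Rightarrow> (nat \<Rightarrow> nat \<Rightarrow> nat) \<Rightarrow> (nat \<Rightarrow> nat \<Rightarrow> nat) \<Rightarrow> bool" where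
  "table_embedding e G P \<longleftrightarrow> inj_on e {1..} \<and> e ` {1..} \<subseteq> {1..} \<and> e 1 = 1 \<and>
     (\<forall>n m. 1 \<le> n \<and> 1 \<le> m \<longrightarrow> P (e n) (e m) = e (G n m))"

lemma table_embedding_prod_table_left:
  assumes "group_table G2"
  shows "table_embedding (\<lambda>n. pos_pair n 1) G1 (prod_table G1 G2)"
  unfolding table_embedding_def
proof (intro conjI allI impI)
  show "inj_on (\<lambda>n. pos_pair n 1) {1..}"
    by (rule inj_onI) (metis atLeast_iff order_refl pos_fst_pos_pair)
qed (use assms in \<open>auto simp: prod_table_pos_pair group_table_left_one\<close>)

lemma table_embedding_prod_table_right:
  assumes "group_table G1"
  shows "table_embedding (\<lambda>n. pos_pair 1 n) G2 (prod_table G1 G2)"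
  unfolding table_embedding_def
proof (intro conjI allI impI)
  show "inj_on (\<lambda>n. pos_pair 1 n) {1..}"
    by (rule inj_onI) (metis atLeast_iff order_refl pos_snd_pos_pair)
qed (use assms in \<open>auto simp: prod_table_pos_pair group_table_left_one\<close>)

lemma table_embedding_realises_basic_clopen:
  assumes P: "group_table P" and e: "table_embedding e G P"
    and "G \<in> basic_clopen L" and "pos_triples L"
  obtains \<psi> where "perm1 \<psi>" and "h_perm \<psi> P \<in> basic_clopen L"
proof -
  define S where "S = insert 1 (\<Union>(n, m, k) \<in> set L. {n, m, k})"
  have "finite S" and "S \<subseteq> {1..}"
    using \<open>pos_triples L\<close> by (auto simp: S_def pos_triples_def)
  moreover have "inj_on e S" "e ` S \<subseteq> {1..}"
    using e \<open>S \<subseteq> {1..}\<close> by (auto simp: table_embedding_def intro: inj_on_subset)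
  ultimately obtain \<alpha> where \<alpha>: "bij_betw \<alpha> {1..} {1..}" and \<alpha>_e: "\<And>s. s \<in> S \<Longrightarrow> \<alpha> s = e s"
    using finite_inj_on_extends_to_bij_betw[OF countableI_type infinite_Ici] by blast
  define \<psi> where "\<psi> = inv_into {1..} \<alpha>"
  have "perm1 \<alpha>"
    using \<alpha> \<alpha>_e[of 1] e by (simp add: perm1_def S_def table_embedding_def)
  then have "perm1 \<psi>"
    unfolding \<psi>_def by (rule perm1_inv_into)
  moreover have "h_perm \<psi> P n m = k" if "(n, m, k) \<in> set L" for n m k
  proof -
    have "n \<in> S" "m \<in> S" "k \<in> S" "1 \<le> n" "1 \<le> m"
      using that \<open>S \<subseteq> {1..}\<close> by (auto simp: S_def)
    moreover have "G n m = k"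
      using that \<open>G \<in> basic_clopen L\<close> by (auto simp: basic_clopen_def)
    ultimately have "h_perm \<psi> P n m = \<psi> (e (G n m))"
      using e \<alpha> by (simp add: \<psi>_def h_perm_inv_into \<alpha>_e table_embedding_def)
    also have "\<dots> = \<psi> (\<alpha> k)"
      using \<open>G n m = k\<close> \<open>k \<in> S\<close> by (simp add: \<alpha>_e)
    also have "\<dots> = k"
      using \<alpha> \<open>k \<in> S\<close> \<open>S \<subseteq> {1..}\<close> by (auto simp: \<psi>_def pos_bij_simps)
    finally show ?thesis .
  qed
  moreover have "group_table (h_perm \<psi> P)"
    using \<open>perm1 \<psi>\<close> P by (rule group_table_h_perm)
  ultimately have "h_perm \<psi> P \<in> basic_clopen L"
    by (auto simp: basic_clopen_def GG_def)
  with \<open>perm1 \<psi>\<close> show ?thesis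
    by (rule that)
qed

theorem lemma5p2:
  fixes L1 L2 :: "(nat \<times> nat \<times> nat) list"
  assumes "pos_triples L1" and "pos_triples L2"
    and "basic_clopen L1 \<noteq> {}" and "basic_clopen L2 \<noteq> {}"
  shows "\<exists>\<phi>. perm1 \<phi> \<and> h_perm \<phi> ` basic_clopen L1 \<inter> basic_clopen L2 \<noteq> {}"
proof -
  obtain G1 G2 where G1: "G1 \<in> basic_clopen L1" and G2: "G2 \<in> basic_clopen L2"
    using assms(3,4) by blast
  then have "group_table G1" "group_table G2"
    by (auto simp: basic_clopen_def GG_def)
  define P where "P = prod_table G1 G2"
  have P: "group_table P"
    unfolding P_def using \<open>group_table G1\<close> \<open>group_table G2\<close> by (rule group_table_prod_table)
  have "table_embedding (\<lambda>n. pos_pair n 1) G1 P"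
    unfolding P_def using \<open>group_table G2\<close> by (rule table_embedding_prod_table_left)
  then obtain \<psi>1 where \<psi>1: "perm1 \<psi>1" "h_perm \<psi>1 P \<in> basic_clopen L1"
    using P G1 assms(1) by (metis table_embedding_realises_basic_clopen)
  have "table_embedding (\<lambda>n. pos_pair 1 n) G2 P"
    unfolding P_def using \<open>group_table G1\<close> by (rule table_embedding_prod_table_right)
  then obtain \<psi>2 where \<psi>2: "perm1 \<psi>2" "h_perm \<psi>2 P \<in> basic_clopen L2"
    using P G2 assms(2) by (metis table_embedding_realises_basic_clopen)
  define \<phi> where "\<phi> = \<psi>2 \<circ> inv_into {1..} \<psi>1"
  have "perm1 \<phi>"
    unfolding \<phi>_def using \<psi>1(1) \<psi>2(1) by (simp add: perm1_comp perm1_inv_into)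
  have "h_perm \<psi>2 P = h_perm \<phi> (h_perm \<psi>1 P)"
    unfolding \<phi>_def using \<psi>1(1) \<psi>2(1) P by (simp add: h_perm_comp_inv_into group_table_def)
  with \<psi>1(2) have "h_perm \<psi>2 P \<in> h_perm \<phi> ` basic_clopen L1"
    by simp
  with \<psi>2(2) \<open>perm1 \<phi>\<close> show ?thesis
    by blast
qed

end
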